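(* Assume the setting below, let $\lambda\in\mathbb C\setminus\sigma_{\mathrm{ess}}(\mathcal L)$, and suppose $\|\mathbf R(x)\|_{\mathbb C^{4\times4}}\le C_Re^{-a_R|x|}$ for all $x$, with $C_R,a_R>0$. Then $$\|\mathbf K(x,y;\lambda)\|_{\mathbb C^{4\times4}}\le\begin{cases}\sqrt2\operatorname{cond}(\mathbf P(\lambda))\,C_R\,e^{-a_R(|x|+|y|)/2}e^{-\kappa_1(x-y)},&x\ge y,\\ \sqrt2\operatorname{cond}(\mathbf P(\lambda))\,C_R\,e^{-a_R(|x|+|y|)/2}e^{\kappa_1(x-y)},&x\le y.\end{cases}$$ Consequently there is $C_R(\lambda)$ such that for all $i,j$ and all $(x,y)\in\mathbb R^2$, $|K_{ij}(x,y;\lambda)|\le C_R(\lambda)e^{-a_R(|x|+|y|)/2}$ and $|K_{ij}(x,y;\lambda)|\le C_R(\lambda)e^{-\kappa_1|x-y|}$.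
   Context: Setting. Real parameters $D,\beta,\delta,\alpha,\epsilon,\gamma,\mu,\nu$ with $\beta\ge0$, $(D,\beta)\neq(0,0)$; $\mathbf B=\begin{bmatrix}\beta&-D/2\\ D/2&\beta\end{bmatrix}$, $\mathbf N_0=\begin{bmatrix}\delta&-\alpha\\ \alpha&\delta\end{bmatrix}$, $\mathbf N_1=\begin{bmatrix}\epsilon&-\gamma\\ \gamma&\epsilon\end{bmatrix}$, $\mathbf N_2=\begin{bmatrix}\mu&-\nu\\ \nu&\mu\end{bmatrix}$; $\psi$ a stationary pulse of the cubic–quintic CGLE $i\Psi_t+\frac D2\Psi_{xx}+\gamma|\Psi|^2\Psi+\nu|\Psi|^4\Psi=i\delta\Psi+i\epsilon|\Psi|^2\Psi+i\beta\Psi_{xx}+i\mu|\Psi|^4\Psi$ ($\Psi=e^{-i\alpha t}\psi(x)$), $\boldsymbol\psi=[\operatorname{Re}\psi\ \operatorname{Im}\psi]^T$; $\mathbf M=\mathbf N_1|\boldsymbol\psi|^2+\mathbf N_2|\boldsymbol\psi|^4+(2\mathbf N_1+4\mathbf N_2|\boldsymbol\psi|^2)\boldsymbol\psi\boldsymbol\psi^T$; $\mathcal L=\mathbf B\partial_x^2+\mathbf N_0+\mathbf M$, $\sigma_{\mathrm{ess}}(\mathcal L)=\{(\delta\pm i\alpha)-s^2(\beta\pm iD/2):s\in\mathbb R\}$. $\mathbf R=\begin{bmatrix}\mathbf 0&\mathbf 0\\ -\mathbf B^{-1}\mathbf M&\mathbf 0\end{bmatrix}$; with polar decomposition $\mathbf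 M=\mathbf V|\mathbf M|$, $\mathbf R_\ell=\begin{bmatrix}\mathbf 0&\mathbf 0\\ -\mathbf B^{-1}\mathbf V|\mathbf M|^{1/2}&\mathbf 0\end{bmatrix}$, $\mathbf R_r=\begin{bmatrix}|\mathbf M|^{1/2}&\mathbf 0\\ \mathbf 0&\mathbf 0\end{bmatrix}$. $\mathbf A_\infty(\lambda)=\begin{bmatrix}\mathbf 0&\mathbf I\\ \mathbf B^{-1}(\lambda\mathbf I-\mathbf N_0)&\mathbf 0\end{bmatrix}$, $\mathbf Q(\lambda)$ its stable spectral projection; $\mathbf K(x,y;\lambda)=-\mathbf R_r(x)\mathbf Qe^{\mathbf A_\infty(x-y)}\mathbf Q\mathbf R_\ell(y)$ for $x\ge y$ and $\mathbf R_r(x)(\mathbf I-\mathbf Q)e^{\mathbf A_\infty(x-y)}(\mathbf I-\mathbf Q)\mathbf R_\ell(y)$ for $x<y$. With $a=\frac{\beta(\lambda-\delta)-D\alpha/2}{\det\mathbf B}$, $b=\frac{-[\frac D2(\lambda-\delta)+\alpha\beta]}{\det\mathbf B}$, $\sigma_\pm=\sqrt{a\pm ib}=\kappa_\pm+i\eta_\pm$ (principal branch, $\kappa_\pm>0$), the eigenvalues of $\mathbf A_\infty(\lambda)$ are $\pm\sigma_\pm$, and $\kappa_1=\min\{\kappa_+,\kappa_-\}$. $\mathbf P(\lambda)$ is the eigenvector matrix with $\mathbf A_\infty=\mathbf P\mathbf D\mathbf P^{-1}$: $\mathbf P=\begin{bmatrix} i/\sigma_-&-i/\sigma_+&i/\sigma_+&-i/\sigma_-\\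 -1/\sigma_-&-1/\sigma_+&1/\sigma_+&1/\sigma_-\\ -i&i&i&-i\\ 1&1&1&1\end{bmatrix}$ if the four eigenvalues are distinct, and $\mathbf P=\begin{bmatrix}0&1&0&1\\1&0&1&0\\0&-\sigma&0&\sigma\\-\sigma&0&\sigma&0\end{bmatrix}$ if there are only two distinct eigenvalues $\pm\sigma$; $\operatorname{cond}(\mathbf P)=\|\mathbf P\|\|\mathbf P^{-1}\|$ (matrix 2-norm). *)

theory Defs
  imports "HOL-Analysis.Analysis"
begin

definition idx2 :: "2 \<Rightarrow> nat" where
  "idx2 i = (if i = 1 then 0 else 1)"

definition idx4 :: "4 \<Rightarrow> nat" where
  "idx4 i = (if i = 1 then 0 else if i = 2 then 1 else if i = 3 then 2 else 3)"

definition mat2 :: "'a \<Rightarrow> 'a \<Rightarrow> 'a \<Rightarrow> 'a \<Rightarrow> 'a^2^2" where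
  "mat2 a b c d = (\<chi> i j. [[a, b], [c, d]] ! idx2 i ! idx2 j)"

definition mat4 :: "'a list list \<Rightarrow> 'a^4^4" where
  "mat4 rs = (\<chi> i j. rs ! idx4 i ! idx4 j)"

text \<open>4x4 block matrix [[A11, A12],[A21, A22]] with 2x2 blocks.\<close>
definition blk :: "'a^2^2 \<Rightarrow> 'a^2^2 \<Rightarrow> 'a^2^2 \<Rightarrow> 'a^2^2 \<Rightarrow> 'a^4^4" where
  "blk A11 A12 A21 A22 = (\<chi> i j.
     let r = (if idx4 i < 2 then idx4 i else idx4 i - 2);
         c = (if idx4 j < 2 then idx4 j else idx4 j - 2);
         ri = (if r = 0 then 1 else 2 :: 2);
         cj = (if c = 0 then 1 else 2 :: 2);
         Bk = (if idx4 i < 2 then (if idx4 j < 2 then A11 else A12)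
               else (if idx4 j < 2 then A21 else A22))
     in Bk $ ri $ cj)"

definition cmat :: "real^'n^'m \<Rightarrow> complex^'n^'m" where
  "cmat A = (\<chi> i j. complex_of_real (A $ i $ j))"

definition opnorm :: "complex^'n^'m \<Rightarrow> real" where
  "opnorm A = onorm (\<lambda>v::complex^'n. A *v v)"

definition cond :: "complex^'n^'n \<Rightarrow> real" where
  "cond A = opnorm A * opnorm (matrix_inv A)"

primrec mpow :: "'a::semiring_1^'n^'n \<Rightarrow> nat \<Rightarrow> 'a^'n^'n" where
  "mpow A 0 = mat 1"
| "mpow A (Suc k) = A ** mpow A k"

definition mexp :: "complex^'n^'n \<Rightarrow> complex^'n^'n" where
  "mexp A = (\<Sum>k. (1 / fact k) *\<^sub>R mpow A k)"

definition psd_sqrt :: "real^2^2 \<Rightarrow> real^2^2" where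
  "psd_sqrt S = (THE T. transpose T = T \<and> (\<forall>v. 0 \<le> v \<bullet> (T *v v)) \<and> T ** T = S)"

definition stable_space :: "complex^4^4 \<Rightarrow> (complex^4) set" where
  "stable_space A = span (\<Union>\<mu>\<in>{\<mu>. Re \<mu> < 0}. {v. mpow (A - mat \<mu>) 4 *v v = 0})"

definition unstable_space :: "complex^4^4 \<Rightarrow> (complex^4) set" where
  "unstable_space A = span (\<Union>\<mu>\<in>{\<mu>. Re \<mu> > 0}. {v. mpow (A - mat \<mu>) 4 *v v = 0})"

definition stable_proj :: "complex^4^4 \<Rightarrow> complex^4^4" where
  "stable_proj A = (THE Q. (\<forall>v. Q *v v \<in> stable_space A)
       \<and> (\<forall>v\<in>stable_space A. Q *v v = v) \<and> (\<forall>v\<in>unstable_space A. Q *v v = 0))"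

definition Bm :: "real \<Rightarrow> real \<Rightarrow> real^2^2" where
  "Bm D \<beta> = mat2 \<beta> (- D / 2) (D / 2) \<beta>"

definition N0m :: "real \<Rightarrow> real \<Rightarrow> real^2^2" where
  "N0m \<delta> \<alpha> = mat2 \<delta> (- \<alpha>) \<alpha> \<delta>"

definition N1m :: "real \<Rightarrow> real \<Rightarrow> real^2^2" where
  "N1m \<epsilon> \<gamma> = mat2 \<epsilon> (- \<gamma>) \<gamma> \<epsilon>"

definition N2m :: "real \<Rightarrow> real \<Rightarrow> real^2^2" where
  "N2m \<mu> \<nu> = mat2 \<mu> (- \<nu>) \<nu> \<mu>"

definition psivec :: "complex \<Rightarrow> real^2" where
  "psivec z = (\<chi> i. if i = 1 then Re z else Im z)"

definition Mm :: "real \<Rightarrow> real \<Rightarrow> real \<Rightarrow> real \<Rightarrow> complex \<Rightarrow> real^2^2" where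
  "Mm \<epsilon> \<gamma> \<mu> \<nu> z =
     (let p = psivec z; n2 = (norm p)\<^sup>2;
          N1 = N1m \<epsilon> \<gamma>; N2 = N2m \<mu> \<nu>
      in n2 *\<^sub>R N1 + (n2 ^ 2) *\<^sub>R N2
         + (2 *\<^sub>R N1 + (4 * n2) *\<^sub>R N2) ** (\<chi> i j. p $ i * p $ j))"

definition ess_spec :: "real \<Rightarrow> real \<Rightarrow> real \<Rightarrow> real \<Rightarrow> complex set" where
  "ess_spec D \<beta> \<delta> \<alpha> =
     {(Complex \<delta> \<alpha>) - complex_of_real (s\<^sup>2) * Complex \<beta> (D / 2) | s. s \<in> (UNIV :: real set)}
   \<union> {(Complex \<delta> (- \<alpha>)) - complex_of_real (s\<^sup>2) * Complex \<beta> (- D / 2) | s. s \<in> (UNIV :: real set)}"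

definition Ainf :: "real \<Rightarrow> real \<Rightarrow> real \<Rightarrow> real \<Rightarrow> complex \<Rightarrow> complex^4^4" where
  "Ainf D \<beta> \<delta> \<alpha> lam = blk 0 (mat 1)
      (cmat (matrix_inv (Bm D \<beta>)) ** (mat lam - cmat (N0m \<delta> \<alpha>))) 0"

definition a_par :: "real \<Rightarrow> real \<Rightarrow> real \<Rightarrow> real \<Rightarrow> complex \<Rightarrow> complex" where
  "a_par D \<beta> \<delta> \<alpha> lam = (of_real \<beta> * (lam - of_real \<delta>) - of_real (D * \<alpha> / 2)) / of_real (det (Bm D \<beta>))"

definition b_par :: "real \<Rightarrow> real \<Rightarrow> real \<Rightarrow> real \<Rightarrow> complex \<Rightarrow> complex" where
  "b_par D \<beta> \<delta> \<alpha> lam = - (of_real (D / 2) * (lam - of_real \<delta>) + of_real (\<alpha> * \<beta>)) / of_real (det (Bm D \<beta>))"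

definition sigma_p :: "real \<Rightarrow> real \<Rightarrow> real \<Rightarrow> real \<Rightarrow> complex \<Rightarrow> complex" where
  "sigma_p D \<beta> \<delta> \<alpha> lam = csqrt (a_par D \<beta> \<delta> \<alpha> lam + \<i> * b_par D \<beta> \<delta> \<alpha> lam)"

definition sigma_m :: "real \<Rightarrow> real \<Rightarrow> real \<Rightarrow> real \<Rightarrow> complex \<Rightarrow> complex" where
  "sigma_m D \<beta> \<delta> \<alpha> lam = csqrt (a_par D \<beta> \<delta> \<alpha> lam - \<i> * b_par D \<beta> \<delta> \<alpha> lam)"

definition kappa1 :: "real \<Rightarrow> real \<Rightarrow> real \<Rightarrow> real \<Rightarrow> complex \<Rightarrow> real" where
  "kappa1 D \<beta> \<delta> \<alpha> lam = min (Re (sigma_p D \<beta> \<delta> \<alpha> lam)) (Re (sigma_m D \<beta> \<delta> \<alpha> lam))"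

text \<open>Eigenvector matrix P: the four eigenvalues \<open>\<plusminus>\<sigma>\<^sub>\<plusminus>\<close> are distinct iff
  \<open>\<sigma>\<^sub>+ \<noteq> \<sigma>\<^sub>-\<close> (their real parts are positive).\<close>
definition Pm :: "real \<Rightarrow> real \<Rightarrow> real \<Rightarrow> real \<Rightarrow> complex \<Rightarrow> complex^4^4" where
  "Pm D \<beta> \<delta> \<alpha> lam =
    (let sp = sigma_p D \<beta> \<delta> \<alpha> lam; sm = sigma_m D \<beta> \<delta> \<alpha> lam in
     if sp \<noteq> sm then
       mat4 [[\<i> / sm, - \<i> / sp, \<i> / sp, - \<i> / sm],
             [- 1 / sm, - 1 / sp, 1 / sp, 1 / sm],
             [- \<i>, \<i>, \<i>, - \<i>],
             [1, 1, 1, 1]]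
     else
       mat4 [[0, 1, 0, 1],
             [1, 0, 1, 0],
             [0, - sp, 0, sp],
             [- sp, 0, sp, 0]])"


definition absM :: "real^2^2 \<Rightarrow> real^2^2" where
  "absM M = psd_sqrt (transpose M ** M)"

definition Rmat :: "real \<Rightarrow> real \<Rightarrow> real^2^2 \<Rightarrow> complex^4^4" where
  "Rmat D \<beta> M = cmat (blk 0 0 (- (matrix_inv (Bm D \<beta>) ** M)) 0)"

definition Rl :: "real \<Rightarrow> real \<Rightarrow> real^2^2 \<Rightarrow> real^2^2 \<Rightarrow> complex^4^4" where
  "Rl D \<beta> V M = cmat (blk 0 0 (- (matrix_inv (Bm D \<beta>) ** V ** psd_sqrt (absM M))) 0)"

definition Rr :: "real^2^2 \<Rightarrow> complex^4^4" where
  "Rr M = cmat (blk (psd_sqrt (absM M)) 0 0 0)"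

text \<open>The kernel K(x,y;lam); \<open>Mx\<close>, \<open>My\<close> are M(x), M(y) and \<open>Vy\<close> is the polar factor V(y).\<close>
definition Kmat :: "real \<Rightarrow> real \<Rightarrow> real \<Rightarrow> real \<Rightarrow> complex \<Rightarrow> real \<Rightarrow> real \<Rightarrow>
     real^2^2 \<Rightarrow> real^2^2 \<Rightarrow> real^2^2 \<Rightarrow> complex^4^4" where
  "Kmat D \<beta> \<delta> \<alpha> lam x y Mx Vy My =
    (let A = Ainf D \<beta> \<delta> \<alpha> lam; Q = stable_proj A; E = mexp ((x - y) *\<^sub>R A) in
     if y \<le> x then - (Rr Mx ** Q ** E ** Q ** Rl D \<beta> Vy My)
     else Rr Mx ** (mat 1 - Q) ** E ** (mat 1 - Q) ** Rl D \<beta> Vy My)"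

end

theory Submission
  imports Defs
begin

text \<open>In the eigenbasis \<open>P\<close> we have \<open>A\<^sub>\<infinity> = P diag(-\<sigma>\<^sub>-, -\<sigma>\<^sub>+, \<sigma>\<^sub>+, \<sigma>\<^sub>-) P\<^sup>-\<^sup>1\<close>,
  and \<open>Re \<sigma>\<^sub>\<plusminus> > 0\<close> because \<open>\<lambda>\<close> is off the essential spectrum. The stable projection
  \<open>Q\<close> and \<open>exp (t A\<^sub>\<infinity>)\<close> are both diagonal in this basis, so \<open>Q exp (t A\<^sub>\<infinity>) Q\<close>
  (for \<open>t \<ge> 0\<close>) and \<open>(I - Q) exp (t A\<^sub>\<infinity>) (I - Q)\<close> (for \<open>t \<le> 0\<close>) have norm at most
  \<open>cond P \<cdot> exp (-\<kappa>\<^sub>1 |t|)\<close>.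
  For the outer factors, \<open>\<parallel>|M|\<^sup>1\<^sup>/\<^sup>2 u\<parallel>\<^sup>2 = \<langle>u, |M| u\<rangle> \<le> \<parallel>u\<parallel> \<parallel>M u\<parallel>\<close> and \<open>B\<close> is
  \<open>\<surd>det B\<close> times a rotation; hence \<open>\<parallel>R\<^sub>r(x)\<parallel> \<parallel>R\<^sub>\<ell>(y)\<parallel> \<le> (\<parallel>R(x)\<parallel> \<parallel>R(y)\<parallel>)\<^sup>1\<^sup>/\<^sup>2\<close>,
  which the hypothesis on \<open>R\<close> bounds by \<open>C\<^sub>R exp (-a\<^sub>R (|x| + |y|) / 2)\<close>.\<close>

lemma idx4_simps [simp]: "idx4 1 = 0" "idx4 2 = 1" "idx4 3 = 2" "idx4 4 = 3"
  by (simp_all add: idx4_def)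

lemma idx2_simps [simp]: "idx2 1 = 0" "idx2 2 = 1"
  by (simp_all add: idx2_def)

lemma mat2_nth [simp]:
  "mat2 a b c d $ 1 $ 1 = a" "mat2 a b c d $ 1 $ 2 = b"
  "mat2 a b c d $ 2 $ 1 = c" "mat2 a b c d $ 2 $ 2 = d"
  by (simp_all add: mat2_def)

lemma mat4_nth [simp]: "mat4 rs $ i $ j = rs ! idx4 i ! idx4 j"
  by (simp add: mat4_def)

lemma cmat_nth [simp]: "cmat A $ i $ j = complex_of_real (A $ i $ j)"
  by (simp add: cmat_def)

lemma blk_nth [simp]:
  "blk A B C E $ 1 $ 1 = A $ 1 $ 1" "blk A B C E $ 1 $ 2 = A $ 1 $ 2"
  "blk A B C E $ 1 $ 3 = B $ 1 $ 1" "blk A B C E $ 1 $ 4 = B $ 1 $ 2"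
  "blk A B C E $ 2 $ 1 = A $ 2 $ 1" "blk A B C E $ 2 $ 2 = A $ 2 $ 2"
  "blk A B C E $ 2 $ 3 = B $ 2 $ 1" "blk A B C E $ 2 $ 4 = B $ 2 $ 2"
  "blk A B C E $ 3 $ 1 = C $ 1 $ 1" "blk A B C E $ 3 $ 2 = C $ 1 $ 2"
  "blk A B C E $ 3 $ 3 = E $ 1 $ 1" "blk A B C E $ 3 $ 4 = E $ 1 $ 2"
  "blk A B C E $ 4 $ 1 = C $ 2 $ 1" "blk A B C E $ 4 $ 2 = C $ 2 $ 2"
  "blk A B C E $ 4 $ 3 = E $ 2 $ 1" "blk A B C E $ 4 $ 4 = E $ 2 $ 2"
  by (simp_all add: blk_def Let_def)

lemma transpose_nth [simp]: "transpose A $ i $ j = A $ j $ i"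
  by (simp add: transpose_def)

lemma mat22_eq_iff:
  "(A::'a^2^2) = B \<longleftrightarrow> A$1$1 = B$1$1 \<and> A$1$2 = B$1$2 \<and> A$2$1 = B$2$1 \<and> A$2$2 = B$2$2"
  by (simp add: vec_eq_iff forall_2)

lemma symmetric_mat22_iff: "transpose (S::'a^2^2) = S \<longleftrightarrow> S$1$2 = S$2$1"
  by (auto simp: mat22_eq_iff)

lemma mat22_mult_nth: "((A::'a::semiring_1^2^2) ** B)$i$j = A$i$1 * B$1$j + A$i$2 * B$2$j"
  by (simp add: matrix_matrix_mult_def sum_2)

lemma mat22_mult_vec_nth: "((A::'a::semiring_1^2^2) *v v)$i = A$i$1 * v$1 + A$i$2 * v$2"
  by (simp add: matrix_vector_mult_def sum_2)

lemma mat1_eq_mat2: "(mat 1 :: 'a::semiring_1^2^2) = mat2 1 0 0 1"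
  by (simp add: mat22_eq_iff mat_def)

lemma inner_vec2: "(u::real^2) \<bullet> v = u$1 * v$1 + u$2 * v$2"
  by (simp add: inner_vec_def sum_2)

lemma norm_vec2_squared: "(norm (u::real^2))\<^sup>2 = (u$1)\<^sup>2 + (u$2)\<^sup>2"
  unfolding power2_norm_eq_inner inner_vec2 by (simp add: power2_eq_square)

lemma norm_vec4_squared:
  "(norm (v::complex^4))\<^sup>2 = (cmod (v$1))\<^sup>2 + (cmod (v$2))\<^sup>2 + (cmod (v$3))\<^sup>2 + (cmod (v$4))\<^sup>2"
  unfolding norm_vec_def L2_set_def by (simp add: sum_4)

lemma mat44_mult_vec_nth:
  "((A::'a::semiring_1^4^4) *v v)$i = A$i$1 * v$1 + A$i$2 * v$2 + A$i$3 * v$3 + A$i$4 * v$4"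
  by (simp add: matrix_vector_mult_def sum_4)

lemma mat44_mult_nth:
  "((A::'a::semiring_1^4^4) ** B)$i$j = A$i$1 * B$1$j + A$i$2 * B$2$j + A$i$3 * B$3$j + A$i$4 * B$4$j"
  by (simp add: matrix_matrix_mult_def sum_4)

lemma mat_nth: "(mat c :: 'a::zero^'n^'n) $ i $ j = (if i = j then c else 0)"
  by (simp add: mat_def)

section \<open>Square roots of positive semidefinite 2x2 matrices\<close>

definition is_psd_sqrt :: "real^2^2 \<Rightarrow> real^2^2 \<Rightarrow> bool" where
  "is_psd_sqrt S T \<longleftrightarrow> transpose T = T \<and> (\<forall>v. 0 \<le> v \<bullet> (T *v v)) \<and> T ** T = S"

lemma inner_matrix_vector_mult:
  fixes X :: "real^'n^'m"
  shows "(X *v u) \<bullet> (X *v w) = u \<bullet> ((transpose X ** X) *v w)"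
  by (metis dot_lmul_matrix matrix_vector_mul_assoc vector_transpose_matrix)

lemma psd_mat22_entries:
  fixes S :: "real^2^2"
  assumes psd: "\<forall>v. 0 \<le> v \<bullet> (S *v v)" and sym: "S$1$2 = S$2$1"
  shows "0 \<le> S$1$1" "0 \<le> S$2$2" "(S$1$2)\<^sup>2 \<le> S$1$1 * S$2$2"
proof -
  have form: "0 \<le> S$1$1 * x*x + 2 * S$1$2 * x * y + S$2$2 * y * y" for x y
    using psd[rule_format, of "vector [x, y]"] sym
    by (simp add: inner_vec2 mat22_mult_vec_nth algebra_simps)
  show S11: "0 \<le> S$1$1" using form[of 1 0] by simp
  show "0 \<le> S$2$2" using form[of 0 1] by simp
  show "(S$1$2)\<^sup>2 \<le> S$1$1 * S$2$2"
  proof (cases "S$1$1 = 0")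
    case True
    show ?thesis
    proof (rule ccontr)
      assume "\<not> ?thesis"
      then have "S$1$2 \<noteq> 0" using True by simp
      then have "S$1$1 * x*x + 2 * S$1$2 * x * 1 + S$2$2 * 1 * 1 = -1"
        if "x = - (S$2$2 + 1) / (2 * S$1$2)" for x
        using True that by (simp add: field_simps)
      then show False using form[of "- (S$2$2 + 1) / (2 * S$1$2)" 1] by simp
    qed
  next
    case False
    have "0 \<le> S$1$1 * (S$1$1 * S$2$2 - (S$1$2)\<^sup>2)"
      using form[of "- S$1$2" "S$1$1"] by (simp add: power2_eq_square algebra_simps)
    then show ?thesis using False S11 by (simp add: zero_le_mult_iff)
  qed
qed

text \<open>The square of \<open>[[p, q], [q, r]]\<close> is \<open>[[p\<^sup>2 + q\<^sup>2, q (p + r)], [q (p + r), q\<^sup>2 + r\<^sup>2]]\<close>.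
  It fixes \<open>p r - q\<^sup>2 \<ge> 0\<close> (its determinant is \<open>(p r - q\<^sup>2)\<^sup>2\<close>), and then the trace \<open>p + r\<close>.\<close>
lemma psd_mat22_determined_by_square:
  fixes p q r p' q' r' :: real
  assumes "p \<ge> 0" "r \<ge> 0" "q\<^sup>2 \<le> p*r" "p' \<ge> 0" "r' \<ge> 0" "q'\<^sup>2 \<le> p'*r'"
    and sq: "p\<^sup>2+q\<^sup>2 = p'\<^sup>2+q'\<^sup>2" "q*(p+r) = q'*(p'+r')" "q\<^sup>2+r\<^sup>2 = q'\<^sup>2+r'\<^sup>2"
  shows "p = p' \<and> q = q' \<and> r = r'"
proof -
  have "(p*r - q\<^sup>2)\<^sup>2 = (p\<^sup>2+q\<^sup>2)*(q\<^sup>2+r\<^sup>2) - (q*(p+r))\<^sup>2"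
    "(p'*r' - q'\<^sup>2)\<^sup>2 = (p'\<^sup>2+q'\<^sup>2)*(q'\<^sup>2+r'\<^sup>2) - (q'*(p'+r'))\<^sup>2"
    by (simp_all add: power2_eq_square algebra_simps)
  then have det: "p*r - q\<^sup>2 = p'*r' - q'\<^sup>2"
    using sq assms(3,6) power2_eq_iff_nonneg[of "p*r - q\<^sup>2" "p'*r' - q'\<^sup>2"] by simp
  have "(p+r)\<^sup>2 = (p\<^sup>2+q\<^sup>2) + (q\<^sup>2+r\<^sup>2) + 2*(p*r - q\<^sup>2)"
    "(p'+r')\<^sup>2 = (p'\<^sup>2+q'\<^sup>2) + (q'\<^sup>2+r'\<^sup>2) + 2*(p'*r' - q'\<^sup>2)"
    by (simp_all add: power2_eq_square algebra_simps)
  then have trace: "p + r = p' + r'"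
    using sq det assms(1,2,4,5) power2_eq_iff_nonneg[of "p+r" "p'+r'"] by simp
  show ?thesis
  proof (cases "p + r = 0")
    case True
    then have "p = 0" "r = 0" "p' = 0" "r' = 0" using assms trace by linarith+
    then show ?thesis using assms by simp
  next
    case False
    have "p*(p+r) = (p\<^sup>2+q\<^sup>2) + (p*r - q\<^sup>2)" "p'*(p'+r') = (p'\<^sup>2+q'\<^sup>2) + (p'*r' - q'\<^sup>2)"
      "r*(p+r) = (q\<^sup>2+r\<^sup>2) + (p*r - q\<^sup>2)" "r'*(p'+r') = (q'\<^sup>2+r'\<^sup>2) + (p'*r' - q'\<^sup>2)"
      by (simp_all add: power2_eq_square algebra_simps)
    then show ?thesis using sq det trace False by (metis mult_cancel_right)
  qed
qed

lemma is_psd_sqrt_exists: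
  fixes S :: "real^2^2"
  assumes sym: "transpose S = S" and psd: "\<forall>v. 0 \<le> v \<bullet> (S *v v)"
  shows "\<exists>T. is_psd_sqrt S T"
proof -
  have s12: "S$1$2 = S$2$1" using sym by (simp add: symmetric_mat22_iff)
  note E = psd_mat22_entries[OF psd s12]
  define d where "d = sqrt (S$1$1 * S$2$2 - (S$1$2)\<^sup>2)"
  define t where "t = sqrt (S$1$1 + S$2$2 + 2*d)"
  have d0: "d \<ge> 0" and dsq: "d\<^sup>2 = S$1$1 * S$2$2 - (S$1$2)\<^sup>2"
    using E by (simp_all add: d_def)
  have tsq: "t\<^sup>2 = S$1$1 + S$2$2 + 2*d" using E d0 by (simp add: t_def)
  show ?thesis
  proof (cases "t = 0")
    case True
    then have "S$1$1 + S$2$2 + 2*d = 0" using tsq by simp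
    then have "S$1$1 = 0" "S$2$2 = 0" "d = 0" using E d0 by linarith+
    then have "S = 0" using E s12 by (simp add: mat22_eq_iff)
    then have "is_psd_sqrt S 0" by (simp add: is_psd_sqrt_def symmetric_mat22_iff)
    then show ?thesis by blast
  next
    case False
    text \<open>\<open>T = (S + d I) / t\<close> with \<open>d = \<surd>det S\<close> and \<open>t = \<surd>(tr S + 2 d)\<close>: by Cayley--Hamilton
      \<open>(S + d I)\<^sup>2 = (tr S + 2 d) S\<close>.\<close>
    define T where "T = mat2 ((S$1$1 + d)/t) (S$1$2/t) (S$1$2/t) ((S$2$2 + d)/t)"
    have tpos: "t > 0" using False E d0 by (simp add: t_def)
    have "transpose T = T" by (simp add: T_def symmetric_mat22_iff)
    moreover have "0 \<le> v \<bullet> (T *v v)" for v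
    proof -
      have "v \<bullet> (T *v v) = (v \<bullet> (S *v v) + d * ((v$1)\<^sup>2 + (v$2)\<^sup>2)) / t"
        using s12 by (simp add: T_def inner_vec2 mat22_mult_vec_nth power2_eq_square
            add_divide_distrib algebra_simps)
      then show ?thesis using psd d0 tpos by simp
    qed
    moreover have "T ** T = S"
      using tpos dsq tsq s12
      by (simp add: T_def mat22_eq_iff mat22_mult_nth divide_simps) (simp add: power2_eq_square algebra_simps)
    ultimately show ?thesis unfolding is_psd_sqrt_def by blast
  qed
qed

lemma is_psd_sqrt_unique:
  assumes "is_psd_sqrt S T1" "is_psd_sqrt S T2"
  shows "T1 = T2"
proof -
  have sym: "T1$1$2 = T1$2$1" "T2$1$2 = T2$2$1"
    using assms unfolding is_psd_sqrt_def by (simp_all add: symmetric_mat22_iff)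
  have psd: "\<forall>v. 0 \<le> v \<bullet> (T1 *v v)" "\<forall>v. 0 \<le> v \<bullet> (T2 *v v)"
    using assms unfolding is_psd_sqrt_def by simp_all
  have "T1 ** T1 = T2 ** T2" using assms unfolding is_psd_sqrt_def by simp
  then have "(T1**T1)$1$1 = (T2**T2)$1$1" "(T1**T1)$1$2 = (T2**T2)$1$2" "(T1**T1)$2$2 = (T2**T2)$2$2"
    by simp_all
  then have "(T1$1$1)\<^sup>2 + (T1$1$2)\<^sup>2 = (T2$1$1)\<^sup>2 + (T2$1$2)\<^sup>2"
    "T1$1$2 * (T1$1$1 + T1$2$2) = T2$1$2 * (T2$1$1 + T2$2$2)"
    "(T1$1$2)\<^sup>2 + (T1$2$2)\<^sup>2 = (T2$1$2)\<^sup>2 + (T2$2$2)\<^sup>2"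
    using sym by (simp_all add: mat22_mult_nth power2_eq_square algebra_simps)
  then have "T1$1$1 = T2$1$1 \<and> T1$1$2 = T2$1$2 \<and> T1$2$2 = T2$2$2"
    by (rule psd_mat22_determined_by_square[OF psd_mat22_entries[OF psd(1) sym(1)]
          psd_mat22_entries[OF psd(2) sym(2)]])
  then show ?thesis using sym by (simp add: mat22_eq_iff)
qed

lemma is_psd_sqrt_psd_sqrt:
  assumes "transpose S = S" "\<forall>v. 0 \<le> v \<bullet> (S *v v)"
  shows "is_psd_sqrt S (psd_sqrt S)"
proof -
  have "\<exists>!T. is_psd_sqrt S T" using is_psd_sqrt_exists[OF assms] is_psd_sqrt_unique by blast
  then show ?thesis unfolding psd_sqrt_def is_psd_sqrt_def[symmetric] by (rule theI')
qed

lemma is_psd_sqrt_absM: "is_psd_sqrt (transpose M ** M) (absM M)"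
  unfolding absM_def
proof (rule is_psd_sqrt_psd_sqrt)
  show "transpose (transpose M ** M) = transpose M ** M" by (simp add: matrix_transpose_mul)
  show "\<forall>v. 0 \<le> v \<bullet> ((transpose M ** M) *v v)"
    by (metis inner_matrix_vector_mult inner_ge_zero)
qed

lemma norm_sqrt_absM_mult_squared_le:
  "(norm (psd_sqrt (absM M) *v u))\<^sup>2 \<le> norm u * norm (M *v u)"
proof -
  let ?A = "absM M" and ?T = "psd_sqrt (absM M)"
  have A: "transpose ?A = ?A" "\<forall>v. 0 \<le> v \<bullet> (?A *v v)" "?A ** ?A = transpose M ** M"
    using is_psd_sqrt_absM[of M] unfolding is_psd_sqrt_def by auto
  then have T: "transpose ?T = ?T" "?T ** ?T = ?A"
    using is_psd_sqrt_psd_sqrt[of ?A] unfolding is_psd_sqrt_def by auto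
  have "(norm (?T *v u))\<^sup>2 = u \<bullet> (?A *v u)"
    by (simp add: power2_norm_eq_inner inner_matrix_vector_mult T)
  also have "\<dots> \<le> norm u * norm (?A *v u)" by (rule norm_cauchy_schwarz)
  also have "norm (?A *v u) = norm (M *v u)"
    using A by (simp add: norm_eq_sqrt_inner inner_matrix_vector_mult)
  finally show ?thesis .
qed

lemma opnorm_nonneg: "0 \<le> opnorm (A::complex^'n^'m)"
  unfolding opnorm_def by (rule onorm_pos_le[OF matrix_vector_mul_bounded_linear])

lemma norm_mult_le_opnorm: "norm ((A::complex^'n^'m) *v v) \<le> opnorm A * norm v"
  unfolding opnorm_def by (rule onorm[OF matrix_vector_mul_bounded_linear])

lemma opnorm_le_sqrt:
  assumes "\<And>v. (norm ((A::complex^'n^'m) *v v))\<^sup>2 \<le> c * (norm v)\<^sup>2"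
  shows "opnorm A \<le> sqrt c"
  unfolding opnorm_def
proof (rule onorm_le)
  fix v
  have "norm (A *v v) \<le> sqrt (c * (norm v)\<^sup>2)" using assms by (rule real_le_rsqrt)
  then show "norm (A *v v) \<le> sqrt c * norm v" by (simp add: real_sqrt_mult)
qed

lemma opnorm_mult_le: "opnorm ((A::complex^'n^'m) ** B) \<le> opnorm A * opnorm B"
proof -
  have "(\<lambda>v. (A ** B) *v v) = (\<lambda>v. A *v v) \<circ> (\<lambda>v. B *v v)"
    by (simp add: fun_eq_iff matrix_vector_mul_assoc)
  then show ?thesis unfolding opnorm_def
    using onorm_compose[OF matrix_vector_mul_bounded_linear matrix_vector_mul_bounded_linear, of A B]
    by simp
qed

lemma opnorm_mult3_le: "opnorm ((A::complex^'n^'n) ** B ** C) \<le> opnorm A * opnorm B * opnorm C"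
  by (meson mult_right_mono opnorm_mult_le opnorm_nonneg order_trans)

lemma uminus_matrix_vector_mult: "(- (A::'a::ring_1^'n^'m)) *v v = - (A *v v)"
  by (simp add: vec_eq_iff matrix_vector_mult_def sum_negf)

lemma opnorm_uminus: "opnorm (- (A::complex^'n^'m)) = opnorm A"
proof -
  have "(\<lambda>v. (- A) *v v) = (\<lambda>v. - (A *v v))"
    by (simp add: fun_eq_iff uminus_matrix_vector_mult)
  then show ?thesis unfolding opnorm_def using onorm_neg[of "\<lambda>v. A *v v"] by simp
qed

lemma norm_nth_le_opnorm: "cmod ((A::complex^'n^'m) $ i $ j) \<le> opnorm A"
proof -
  have "(A *v axis j 1) $ i = A $ i $ j"
    by (simp add: matrix_vector_mult_def axis_def if_distrib cong: if_cong)
  then have "cmod (A $ i $ j) \<le> norm (A *v axis j 1)"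
    by (metis Finite_Cartesian_Product.norm_nth_le)
  also have "\<dots> \<le> opnorm A" using norm_mult_le_opnorm[of A "axis j 1"] by simp
  finally show ?thesis .
qed

lemma norm_cmat_blk_mult_squared:
  fixes S :: "real^2^2" and v :: "complex^4"
  defines "u \<equiv> vector [Re (v$1), Re (v$2)] :: real^2" and "w \<equiv> vector [Im (v$1), Im (v$2)] :: real^2"
  shows "(norm (cmat (blk S 0 0 0) *v v))\<^sup>2 = (norm (S *v u))\<^sup>2 + (norm (S *v w))\<^sup>2"
    and "(norm (cmat (blk 0 0 S 0) *v v))\<^sup>2 = (norm (S *v u))\<^sup>2 + (norm (S *v w))\<^sup>2"
    and "(norm u)\<^sup>2 + (norm w)\<^sup>2 \<le> (norm v)\<^sup>2"
  unfolding norm_vec4_squared norm_vec2_squared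
  by (simp_all add: mat44_mult_vec_nth mat22_mult_vec_nth cmod_power2 u_def w_def)

lemma opnorm_cmat_blk_le:
  fixes S :: "real^2^2"
  assumes S: "\<And>u. (norm (S *v u))\<^sup>2 \<le> c * (norm u)\<^sup>2"
  shows "opnorm (cmat (blk S 0 0 0)) \<le> sqrt c" "opnorm (cmat (blk 0 0 S 0)) \<le> sqrt c"
proof -
  have "(norm (S *v axis 1 1))\<^sup>2 \<le> c" using S[of "axis 1 1"] by simp
  then have "c \<ge> 0" by (meson order_trans zero_le_power2)
  then have "(norm (S *v u))\<^sup>2 + (norm (S *v w))\<^sup>2 \<le> c * (norm v)\<^sup>2"
    if "(norm u)\<^sup>2 + (norm w)\<^sup>2 \<le> (norm v)\<^sup>2" for u w :: "real^2" and v :: "complex^4"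
  proof -
    have "c * (norm u)\<^sup>2 + c * (norm w)\<^sup>2 \<le> c * (norm v)\<^sup>2"
      using mult_left_mono[OF that \<open>c \<ge> 0\<close>] by (simp add: distrib_left)
    then show ?thesis using S[of u] S[of w] by linarith
  qed
  then show "opnorm (cmat (blk S 0 0 0)) \<le> sqrt c" "opnorm (cmat (blk 0 0 S 0)) \<le> sqrt c"
    by (simp_all add: opnorm_le_sqrt norm_cmat_blk_mult_squared)
qed

lemma norm_mult_le_opnorm_cmat_blk:
  fixes S :: "real^2^2"
  shows "norm (S *v u) \<le> opnorm (cmat (blk 0 0 S 0)) * norm u"
proof -
  define v :: "complex^4" where "v = (\<chi> i. if i = 1 then of_real (u$1) else if i = 2 then of_real (u$2) else 0)"
  have "vector [Re (v$1), Re (v$2)] = u" "vector [Im (v$1), Im (v$2)] = (0::real^2)"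
    by (simp_all add: v_def vec_eq_iff forall_2)
  then have "norm (cmat (blk 0 0 S 0) *v v) = norm (S *v u)"
    using norm_cmat_blk_mult_squared(2)[of S v] by (simp add: power2_eq_iff_nonneg)
  moreover have "(norm v)\<^sup>2 = (norm u)\<^sup>2"
    using norm_vec4_squared[of v] norm_vec2_squared[of u] by (simp add: v_def)
  then have "norm v = norm u" by (simp add: power2_eq_iff_nonneg)
  ultimately show ?thesis using norm_mult_le_opnorm[of "cmat (blk 0 0 S 0)" v] by simp
qed

section \<open>The factors \<open>R\<^sub>r\<close> and \<open>R\<^sub>\<ell>\<close>\<close>

lemma det_Bm: "det (Bm D \<beta>) = \<beta>\<^sup>2 + D\<^sup>2 / 4"
  by (simp add: det_2 Bm_def power2_eq_square)

lemma det_Bm_pos: "(D, \<beta>) \<noteq> (0, 0) \<Longrightarrow> 0 < det (Bm D \<beta>)"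
  by (auto simp: det_Bm add_pos_nonneg add_nonneg_pos)

lemma matrix_inv_eqI:
  fixes A X :: "'a::semiring_1^'n^'n"
  assumes "A ** X = mat 1" "X ** A = mat 1"
  shows "matrix_inv A = X"
  unfolding matrix_inv_def
proof (rule some_equality)
  fix Y assume "A ** Y = mat 1 \<and> Y ** A = mat 1"
  then show "Y = X" using assms by (metis matrix_mul_assoc matrix_mul_lid matrix_mul_rid)
qed (use assms in simp)

lemma matrix_inv_Bm:
  assumes "(D, \<beta>) \<noteq> (0, 0)"
  shows "matrix_inv (Bm D \<beta>) = (1 / det (Bm D \<beta>)) *\<^sub>R transpose (Bm D \<beta>)"
proof (rule matrix_inv_eqI)
  define d where "d = det (Bm D \<beta>)"
  have "d \<noteq> 0" "\<beta> * \<beta> + D * D / 4 = d"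
    using det_Bm_pos[OF assms] by (simp_all add: d_def det_Bm power2_eq_square)
  then have "Bm D \<beta> ** (1 / d) *\<^sub>R transpose (Bm D \<beta>) = mat 1"
    "(1 / d) *\<^sub>R transpose (Bm D \<beta>) ** Bm D \<beta> = mat 1"
    by (simp_all add: Bm_def mat1_eq_mat2 mat22_eq_iff mat22_mult_nth field_simps)
  then show "Bm D \<beta> ** (1 / det (Bm D \<beta>)) *\<^sub>R transpose (Bm D \<beta>) = mat 1"
    "(1 / det (Bm D \<beta>)) *\<^sub>R transpose (Bm D \<beta>) ** Bm D \<beta> = mat 1"
    by (simp_all add: d_def)
qed

lemma norm_matrix_inv_Bm_mult:
  assumes "(D, \<beta>) \<noteq> (0, 0)"
  shows "norm (matrix_inv (Bm D \<beta>) *v w) = norm w / sqrt (det (Bm D \<beta>))"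
proof -
  let ?d = "det (Bm D \<beta>)"
  have d: "?d > 0" by (rule det_Bm_pos[OF assms])
  have "matrix_inv (Bm D \<beta>) *v w = (1 / ?d) *\<^sub>R (transpose (Bm D \<beta>) *v w)"
    by (simp add: matrix_inv_Bm[OF assms] scaleR_matrix_vector_assoc[symmetric])
  moreover have "(norm (transpose (Bm D \<beta>) *v w))\<^sup>2 = ?d * (norm w)\<^sup>2"
    unfolding norm_vec2_squared det_Bm
    by (simp add: vector_matrix_mult_def sum_2 Bm_def power2_eq_square algebra_simps)
  ultimately have "(norm (matrix_inv (Bm D \<beta>) *v w))\<^sup>2 = (norm w)\<^sup>2 / ?d"
    using d by (simp add: power_mult_distrib power2_eq_square)
  also have "\<dots> = (norm w / sqrt ?d)\<^sup>2"
    using d by (simp add: power_divide)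
  finally show ?thesis using d by (simp add: power2_eq_iff_nonneg)
qed

lemma norm_mult_le_opnorm_Rmat:
  assumes "(D, \<beta>) \<noteq> (0, 0)"
  shows "norm (M *v u) \<le> sqrt (det (Bm D \<beta>)) * opnorm (Rmat D \<beta> M) * norm u"
proof -
  have d: "det (Bm D \<beta>) > 0" by (rule det_Bm_pos[OF assms])
  have "norm (M *v u) / sqrt (det (Bm D \<beta>)) = norm ((- (matrix_inv (Bm D \<beta>) ** M)) *v u)"
    by (simp add: norm_matrix_inv_Bm_mult[OF assms] uminus_matrix_vector_mult
        matrix_vector_mul_assoc[symmetric])
  also have "\<dots> \<le> opnorm (Rmat D \<beta> M) * norm u"
    unfolding Rmat_def by (rule norm_mult_le_opnorm_cmat_blk)
  finally show ?thesis using d by (simp add: divide_le_eq mult_ac)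
qed

lemma norm_sqrt_absM_mult_squared_le_Rmat:
  assumes "(D, \<beta>) \<noteq> (0, 0)"
  shows "(norm (psd_sqrt (absM M) *v u))\<^sup>2 \<le> sqrt (det (Bm D \<beta>)) * opnorm (Rmat D \<beta> M) * (norm u)\<^sup>2"
proof -
  have "(norm (psd_sqrt (absM M) *v u))\<^sup>2 \<le> norm u * norm (M *v u)"
    by (rule norm_sqrt_absM_mult_squared_le)
  also have "\<dots> \<le> norm u * (sqrt (det (Bm D \<beta>)) * opnorm (Rmat D \<beta> M) * norm u)"
    by (simp add: mult_left_mono norm_mult_le_opnorm_Rmat[OF assms])
  finally show ?thesis by (simp add: power2_eq_square mult_ac)
qed

lemma opnorm_Rr_le:
  assumes "(D, \<beta>) \<noteq> (0, 0)"
  shows "opnorm (Rr M) \<le> sqrt (sqrt (det (Bm D \<beta>)) * opnorm (Rmat D \<beta> M))"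
  unfolding Rr_def by (rule opnorm_cmat_blk_le(1)[OF norm_sqrt_absM_mult_squared_le_Rmat[OF assms]])

lemma opnorm_Rl_le:
  assumes "(D, \<beta>) \<noteq> (0, 0)" and "orthogonal_matrix V"
  shows "opnorm (Rl D \<beta> V M) \<le> sqrt (opnorm (Rmat D \<beta> M) / sqrt (det (Bm D \<beta>)))"
  unfolding Rl_def
proof (rule opnorm_cmat_blk_le(2))
  fix u :: "real^2"
  let ?d = "det (Bm D \<beta>)"
  have d: "?d > 0" by (rule det_Bm_pos[OF assms(1)])
  have V: "norm (V *v w) = norm w" for w
    by (metis assms(2) orthogonal_transformation_matrix orthogonal_transformation
        matrix_vector_mul_linear matrix_of_matrix_vector_mul)
  have "norm ((- (matrix_inv (Bm D \<beta>) ** V ** psd_sqrt (absM M))) *v u)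
      = norm (psd_sqrt (absM M) *v u) / sqrt ?d"
    by (simp add: norm_matrix_inv_Bm_mult[OF assms(1)] V uminus_matrix_vector_mult
        matrix_vector_mul_assoc[symmetric])
  then have "(norm ((- (matrix_inv (Bm D \<beta>) ** V ** psd_sqrt (absM M))) *v u))\<^sup>2
      = (norm (psd_sqrt (absM M) *v u))\<^sup>2 / ?d"
    using d by (simp add: power_divide)
  also have "\<dots> \<le> sqrt ?d * opnorm (Rmat D \<beta> M) * (norm u)\<^sup>2 / ?d"
    using norm_sqrt_absM_mult_squared_le_Rmat[OF assms(1)] d by (simp add: divide_right_mono)
  also have "\<dots> = opnorm (Rmat D \<beta> M) / sqrt ?d * (norm u)\<^sup>2"
    using d by (simp add: field_simps)
  finally show "(norm ((- (matrix_inv (Bm D \<beta>) ** V ** psd_sqrt (absM M))) *v u))\<^sup>2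
      \<le> opnorm (Rmat D \<beta> M) / sqrt ?d * (norm u)\<^sup>2" .
qed

text \<open>The factors \<open>\<surd>det B\<close> from \<open>R\<^sub>r\<close> and \<open>1/\<surd>det B\<close> from \<open>R\<^sub>\<ell>\<close> cancel.\<close>
lemma opnorm_Rr_mult_opnorm_Rl_le:
  assumes "(D, \<beta>) \<noteq> (0, 0)" and "orthogonal_matrix V"
  shows "opnorm (Rr Mx) * opnorm (Rl D \<beta> V My) \<le> sqrt (opnorm (Rmat D \<beta> Mx) * opnorm (Rmat D \<beta> My))"
proof -
  have d: "det (Bm D \<beta>) > 0" by (rule det_Bm_pos[OF assms(1)])
  have "opnorm (Rr Mx) * opnorm (Rl D \<beta> V My)
      \<le> sqrt (sqrt (det (Bm D \<beta>)) * opnorm (Rmat D \<beta> Mx)) * sqrt (opnorm (Rmat D \<beta> My) / sqrt (det (Bm D \<beta>)))"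
    by (rule mult_mono[OF opnorm_Rr_le[OF assms(1)] opnorm_Rl_le[OF assms] _ opnorm_nonneg])
      (use d opnorm_nonneg[of "Rmat D \<beta> Mx"] in simp)
  also have "\<dots> = sqrt (opnorm (Rmat D \<beta> Mx) * opnorm (Rmat D \<beta> My))"
    using d by (simp add: real_sqrt_mult[symmetric])
  finally show ?thesis .
qed

section \<open>Diagonalizable matrices\<close>

definition diag :: "'a::zero^'n \<Rightarrow> 'a^'n^'n" where
  "diag d = (\<chi> i j. if i = j then d$i else 0)"

lemma diag_nth: "diag d $ i $ j = (if i = j then d$i else 0)"
  by (simp add: diag_def)

lemma diag_mult_vec: "diag d *v v = (\<chi> i. d$i * v$i)"
  by (simp add: diag_def vec_eq_iff matrix_vector_mult_def if_distrib if_distribR cong: if_cong)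

lemma mult_diag_nth: "(X ** diag d) $ i $ j = X$i$j * d$j"
  by (simp add: diag_def matrix_matrix_mult_def if_distrib if_distribR cong: if_cong)

lemma diag_mult_diag: "diag a ** diag b = diag (\<chi> i. a$i * b$i)"
  by (simp add: vec_eq_iff mult_diag_nth) (simp add: diag_def)

lemma diag_const: "diag (\<chi> i. c) = mat c"
  by (simp add: diag_def mat_def vec_eq_iff)

lemma diag_diff: "diag a - diag b = diag (a - b :: 'a::ab_group_add^'n)"
  by (simp add: diag_def vec_eq_iff)

lemma diag_scaleR: "c *\<^sub>R diag a = diag (c *\<^sub>R a :: 'a::real_vector^'n)"
  by (simp add: diag_def vec_eq_iff)

lemma mpow_diag: "mpow (diag d) k = diag (\<chi> i. d$i ^ k)"
  by (induction k) (simp_all add: diag_const[symmetric] diag_mult_diag)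

lemma matrix_add_rdistrib: "(A + B) ** C = A ** C + B ** (C::'a::semiring_1^'n^'m)"
  by (simp add: vec_eq_iff matrix_matrix_mult_def sum.distrib distrib_right)

lemma mat_mult_commute: "mat c ** (A::'a::comm_semiring_1^'n^'n) = A ** mat c"
  by (simp add: vec_eq_iff matrix_matrix_mult_def mat_def if_distrib if_distribR mult.commute cong: if_cong)

lemma power_series_mpow_diag_sums:
  "(\<lambda>k. (1 / fact k) *\<^sub>R mpow (diag d) k) sums diag (\<chi> i. exp (d$i :: complex))"
proof -
  have "(\<lambda>k. (\<chi> i. d$i ^ k /\<^sub>R fact k)) sums (\<chi> i. exp (d$i))"
    unfolding sums_def
  proof (rule vec_tendstoI)
    fix i
    show "((\<lambda>n. (\<Sum>k<n. \<chi> i. d$i ^ k /\<^sub>R fact k) $ i) \<longlongrightarrow> (\<chi> i. exp (d$i)) $ i) sequentially"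
      using exp_converges[of "d$i"] by (simp add: sums_def)
  qed
  moreover have "bounded_linear (diag :: complex^'n \<Rightarrow> _)"
    unfolding linear_conv_bounded_linear[symmetric]
    by (rule linearI) (simp_all add: diag_def vec_eq_iff)
  ultimately have "(\<lambda>k. diag (\<chi> i. d$i ^ k /\<^sub>R fact k)) sums diag (\<chi> i. exp (d$i))"
    using bounded_linear.sums by blast
  moreover have "(1 / fact k) *\<^sub>R mpow (diag d) k = diag (\<chi> i. d$i ^ k /\<^sub>R fact k)" for k
    by (simp add: mpow_diag diag_scaleR) (simp add: diag_def vec_eq_iff divide_inverse_commute)
  ultimately show ?thesis by simp
qed

lemma opnorm_diag_le:
  assumes "\<And>i. cmod (d$i) \<le> m"
  shows "opnorm (diag d :: complex^'n^'n) \<le> m"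
proof -
  have m: "0 \<le> m" using assms by (meson norm_ge_zero order_trans)
  have "(norm (diag d *v v))\<^sup>2 \<le> m\<^sup>2 * (norm v)\<^sup>2" for v :: "complex^'n"
  proof -
    have "(cmod (d$i * v$i))\<^sup>2 \<le> m\<^sup>2 * (cmod (v$i))\<^sup>2" for i
      using assms[of i] by (simp add: norm_mult power_mult_distrib mult_right_mono power_mono)
    then show ?thesis
      by (simp add: diag_mult_vec norm_vec_def L2_set_def sum_nonneg sum_distrib_left sum_mono)
  qed
  then show ?thesis using opnorm_le_sqrt[of "diag d" "m\<^sup>2"] m by simp
qed

locale similarity =
  fixes P Pinv :: "complex^'n^'n"
  assumes P_Pinv: "P ** Pinv = mat 1" and Pinv_P: "Pinv ** P = mat 1"
begin

definition sim :: "complex^'n^'n \<Rightarrow> complex^'n^'n" where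
  "sim X = P ** X ** Pinv"

lemma matrix_inv_P: "matrix_inv P = Pinv"
  by (rule matrix_inv_eqI[OF P_Pinv Pinv_P])

lemma eq_simI: "A ** P = P ** X \<Longrightarrow> A = sim X"
  by (metis P_Pinv matrix_mul_assoc matrix_mul_rid sim_def)

lemma linear_sim: "linear sim"
  by (rule linearI) (simp_all add: sim_def matrix_add_ldistrib matrix_add_rdistrib
      scalar_matrix_assoc matrix_scalar_ac)

lemma sim_mult: "sim X ** sim Y = sim (X ** Y)"
proof -
  have "P ** X ** Pinv ** (P ** Y ** Pinv) = P ** X ** (Pinv ** P) ** Y ** Pinv"
    by (simp add: matrix_mul_assoc)
  then show ?thesis by (simp add: sim_def Pinv_P matrix_mul_assoc)
qed

lemma sim_mat: "sim (mat c) = mat c"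
  by (metis P_Pinv matrix_mul_assoc mat_mult_commute matrix_mul_lid sim_def)

lemma sim_diff: "sim X - sim Y = sim (X - Y)"
  by (simp add: linear_diff[OF linear_sim])

lemma sim_scaleR: "c *\<^sub>R sim X = sim (c *\<^sub>R X)"
  by (simp add: linear_scale[OF linear_sim])

lemma mpow_sim: "mpow (sim X) k = sim (mpow X k)"
  by (induction k) (simp_all add: sim_mat sim_mult)

lemma P_Pinv_mult_vec: "P *v (Pinv *v v) = v"
  by (simp add: matrix_vector_mul_assoc P_Pinv)

lemma Pinv_P_mult_vec: "Pinv *v (P *v v) = v"
  by (simp add: matrix_vector_mul_assoc Pinv_P)

lemma Pinv_mult_vec_eq_0_iff: "Pinv *v v = 0 \<longleftrightarrow> v = 0"
  by (metis P_Pinv_mult_vec matrix_vector_mult_0_right)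

lemma Pinv_sim_mult_vec: "Pinv *v (sim X *v v) = X *v (Pinv *v v)"
  by (simp add: sim_def matrix_vector_mul_assoc matrix_mul_assoc Pinv_P)

lemma mexp_sim_diag: "mexp (sim (diag d)) = sim (diag (\<chi> i. exp (d$i)))"
proof -
  have "(\<lambda>k. sim ((1 / fact k) *\<^sub>R mpow (diag d) k)) sums sim (diag (\<chi> i. exp (d$i)))"
    using linear_sim power_series_mpow_diag_sums bounded_linear.sums
    unfolding linear_conv_bounded_linear by blast
  then show ?thesis unfolding mexp_def by (simp add: sums_iff sim_scaleR[symmetric] mpow_sim)
qed

lemma opnorm_sim_diag_le:
  assumes "\<And>i. cmod (d$i) \<le> m"
  shows "opnorm (sim (diag d)) \<le> opnorm P * opnorm Pinv * m"
proof -
  have "opnorm (sim (diag d)) \<le> opnorm P * opnorm (diag d) * opnorm Pinv"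
    unfolding sim_def by (rule opnorm_mult3_le)
  also have "\<dots> \<le> opnorm P * m * opnorm Pinv"
    by (intro mult_mono opnorm_diag_le assms order_refl mult_nonneg_nonneg opnorm_nonneg)
      (meson assms norm_ge_zero order_trans)
  finally show ?thesis by (simp add: mult_ac)
qed

end

locale similarity4 = similarity P Pinv for P Pinv :: "complex^4^4"
begin

lemma generalized_eigenspace_sim_diag:
  "mpow (sim (diag l) - mat \<mu>) 4 *v v = 0 \<longleftrightarrow> (\<forall>i. (l$i - \<mu>)^4 * (Pinv *v v)$i = 0)"
proof -
  have "mat \<mu> = sim (diag (\<chi> i. \<mu>))" by (simp add: diag_const sim_mat)
  then have "sim (diag l) - mat \<mu> = sim (diag (l - (\<chi> i. \<mu>)))" by (simp add: sim_diff diag_diff)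
  then have "mpow (sim (diag l) - mat \<mu>) 4 = sim (diag (\<chi> i. (l$i - \<mu>)^4))"
    by (simp add: mpow_sim mpow_diag)
  then have "mpow (sim (diag l) - mat \<mu>) 4 *v v = 0
      \<longleftrightarrow> Pinv *v (sim (diag (\<chi> i. (l$i - \<mu>)^4)) *v v) = 0"
    using Pinv_mult_vec_eq_0_iff by simp
  then show ?thesis by (simp add: Pinv_sim_mult_vec diag_mult_vec vec_eq_iff)
qed

lemma span_generalized_eigenspaces_sim_diag:
  assumes sel: "\<And>i. sel (l$i) \<longleftrightarrow> i \<in> I"
  shows "span (\<Union>\<mu>\<in>{\<mu>. sel \<mu>}. {v. mpow (sim (diag l) - mat \<mu>) 4 *v v = 0})
         = {v. \<forall>i. i \<notin> I \<longrightarrow> (Pinv *v v)$i = 0}" (is "span ?U = ?W")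
proof
  have "subspace ?W"
    by (rule subspaceI) (auto simp: matrix_vector_mult_def distrib_left sum.distrib scaleR_sum_right[symmetric])
  moreover have "?U \<subseteq> ?W"
    using sel by (force simp: generalized_eigenspace_sim_diag)
  ultimately show "span ?U \<subseteq> ?W" by (rule span_minimal[rotated])
next
  show "?W \<subseteq> span ?U"
  proof
    fix v assume v: "v \<in> ?W"
    define c where "c = Pinv *v v"
    define t where "t i = P *v (\<chi> j. if j = i then c$i else 0)" for i
    have "t i \<in> span ?U" for i
    proof (cases "i \<in> I")
      case True
      then have "mpow (sim (diag l) - mat (l$i)) 4 *v t i = 0" "sel (l$i)"
        using sel by (auto simp: generalized_eigenspace_sim_diag t_def Pinv_P_mult_vec)
      then show ?thesis by (blast intro: span_base)
    next
      case False
      then have "(\<chi> j. if j = i then c$i else 0) = 0" using v by (simp add: c_def vec_eq_iff)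
      then have "t i = 0" by (simp add: t_def)
      then show ?thesis by (simp add: span_zero)
    qed
    moreover have "v = t 1 + t 2 + t 3 + t 4"
    proof -
      have "(\<chi> j. if j = 1 then c$1 else 0) + (\<chi> j. if j = 2 then c$2 else 0)
          + (\<chi> j. if j = 3 then c$3 else 0) + (\<chi> j. if j = 4 then c$4 else 0) = c"
        by (simp add: vec_eq_iff forall_4)
      then show ?thesis
        by (simp add: t_def c_def matrix_vector_right_distrib[symmetric] P_Pinv_mult_vec)
    qed
    ultimately show "v \<in> span ?U" by (simp add: span_add)
  qed
qed

lemma stable_proj_sim_diag:
  assumes neg: "\<And>i. Re (l$i) < 0 \<longleftrightarrow> i \<in> I" and pos: "\<And>i. Re (l$i) > 0 \<longleftrightarrow> i \<notin> I"
  shows "stable_proj (sim (diag l)) = sim (diag (\<chi> i. if i \<in> I then 1 else 0))"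
proof -
  define Q where "Q = sim (diag (\<chi> i. if i \<in> I then 1 else 0))"
  have S: "stable_space (sim (diag l)) = {v. \<forall>i. i \<notin> I \<longrightarrow> (Pinv *v v)$i = 0}"
    using span_generalized_eigenspaces_sim_diag[where sel = "\<lambda>\<mu>. Re \<mu> < 0" and I = I] neg
    by (simp add: stable_space_def)
  have U: "unstable_space (sim (diag l)) = {v. \<forall>i. i \<in> I \<longrightarrow> (Pinv *v v)$i = 0}"
    using span_generalized_eigenspaces_sim_diag[where sel = "\<lambda>\<mu>. Re \<mu> > 0" and I = "- I"] pos
    by (simp add: unstable_space_def)
  have PQ: "Pinv *v (Q *v v) = (\<chi> i. if i \<in> I then (Pinv *v v)$i else 0)" for v
    by (simp add: Q_def Pinv_sim_mult_vec diag_mult_vec vec_eq_iff)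
  have Q_range: "Q *v v \<in> stable_space (sim (diag l))" for v
    using PQ by (simp add: S)
  have Q_kernel: "v - Q *v v \<in> unstable_space (sim (diag l))" for v
    using PQ by (simp add: U matrix_vector_mult_diff_distrib)
  have Q_id: "Q *v v = v" if "v \<in> stable_space (sim (diag l))" for v
  proof -
    have "Pinv *v (Q *v v) = Pinv *v v" using that PQ by (simp add: S vec_eq_iff)
    then show ?thesis by (metis P_Pinv_mult_vec)
  qed
  have Q_zero: "Q *v v = 0" if "v \<in> unstable_space (sim (diag l))" for v
  proof -
    have "Pinv *v (Q *v v) = 0" using that PQ by (simp add: U vec_eq_iff)
    then show ?thesis using Pinv_mult_vec_eq_0_iff by blast
  qed
  show ?thesis unfolding stable_proj_def Q_def[symmetric]
  proof (rule the_equality)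
    fix Q' assume Q': "(\<forall>v. Q' *v v \<in> stable_space (sim (diag l)))
      \<and> (\<forall>v\<in>stable_space (sim (diag l)). Q' *v v = v) \<and> (\<forall>v\<in>unstable_space (sim (diag l)). Q' *v v = 0)"
    have "Q' *v v = Q' *v (Q *v v) + Q' *v (v - Q *v v)" for v
      by (simp add: matrix_vector_right_distrib[symmetric])
    then have "Q' *v v = Q *v v" for v using Q' Q_range Q_kernel by simp
    then show "Q' = Q" by (simp add: matrix_eq)
  qed (use Q_range Q_id Q_zero in blast)
qed

lemma sim_diag_mexp_sim_diag:
  "sim (diag a) ** mexp (t *\<^sub>R sim (diag l)) ** sim (diag a)
     = sim (diag (\<chi> i. a$i * exp (t *\<^sub>R l$i) * a$i))"
  by (simp add: sim_scaleR diag_scaleR mexp_sim_diag sim_mult diag_mult_diag)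

lemma opnorm_stable_evolution_le:
  assumes neg: "\<And>i. Re (l$i) < 0 \<longleftrightarrow> i \<in> I" and pos: "\<And>i. Re (l$i) > 0 \<longleftrightarrow> i \<notin> I"
    and decay: "\<And>i. i \<in> I \<Longrightarrow> Re (l$i) \<le> - k" and "t \<ge> 0"
  defines "Q \<equiv> stable_proj (sim (diag l))"
  shows "opnorm (Q ** mexp (t *\<^sub>R sim (diag l)) ** Q) \<le> opnorm P * opnorm Pinv * exp (- k * t)"
proof -
  have "cmod (exp (t *\<^sub>R l$i)) \<le> exp (- k * t)" if "i \<in> I" for i
    using mult_left_mono[OF decay[OF that] \<open>t \<ge> 0\<close>] by (simp add: norm_exp_eq_Re mult.commute)
  then show ?thesis
    unfolding Q_def stable_proj_sim_diag[OF neg pos] sim_diag_mexp_sim_diag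
    by (intro opnorm_sim_diag_le) simp
qed

lemma opnorm_unstable_evolution_le:
  assumes neg: "\<And>i. Re (l$i) < 0 \<longleftrightarrow> i \<in> I" and pos: "\<And>i. Re (l$i) > 0 \<longleftrightarrow> i \<notin> I"
    and growth: "\<And>i. i \<notin> I \<Longrightarrow> k \<le> Re (l$i)" and "t \<le> 0"
  defines "Q \<equiv> stable_proj (sim (diag l))"
  shows "opnorm ((mat 1 - Q) ** mexp (t *\<^sub>R sim (diag l)) ** (mat 1 - Q)) \<le> opnorm P * opnorm Pinv * exp (k * t)"
proof -
  have "mat 1 = sim (diag (\<chi> i. 1))" by (simp add: diag_const sim_mat)
  moreover have "(\<chi> i. 1) - (\<chi> i. if i \<in> I then 1 else 0) = (\<chi> i. if i \<in> I then 0 else (1::complex))"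
    by (simp add: vec_eq_iff)
  ultimately have complement: "mat 1 - Q = sim (diag (\<chi> i. if i \<in> I then 0 else 1))"
    by (simp add: Q_def stable_proj_sim_diag[OF neg pos] sim_diff diag_diff)
  have "cmod (exp (t *\<^sub>R l$i)) \<le> exp (k * t)" if "i \<notin> I" for i
    using mult_left_mono_neg[OF growth[OF that] \<open>t \<le> 0\<close>] by (simp add: norm_exp_eq_Re mult.commute)
  then show ?thesis
    unfolding complement sim_diag_mexp_sim_diag by (intro opnorm_sim_diag_le) simp
qed

end

section \<open>Diagonalization of \<open>A\<^sub>\<infinity>(\<lambda>)\<close>\<close>

lemma Ainf_eq_blk:
  assumes "(D, \<beta>) \<noteq> (0, 0)"
  shows "Ainf D \<beta> \<delta> \<alpha> lam = blk 0 (mat 1)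
    (mat2 (a_par D \<beta> \<delta> \<alpha> lam) (- b_par D \<beta> \<delta> \<alpha> lam) (b_par D \<beta> \<delta> \<alpha> lam) (a_par D \<beta> \<delta> \<alpha> lam)) 0"
proof -
  define d where "d = det (Bm D \<beta>)"
  have "complex_of_real d \<noteq> 0" using det_Bm_pos[OF assms] by (simp add: d_def)
  then have "cmat (matrix_inv (Bm D \<beta>)) ** (mat lam - cmat (N0m \<delta> \<alpha>))
      = mat2 (a_par D \<beta> \<delta> \<alpha> lam) (- b_par D \<beta> \<delta> \<alpha> lam) (b_par D \<beta> \<delta> \<alpha> lam) (a_par D \<beta> \<delta> \<alpha> lam)"
    unfolding a_par_def b_par_def matrix_inv_Bm[OF assms] d_def[symmetric]
    by (simp add: mat22_eq_iff mat22_mult_nth mat_nth Bm_def N0m_def field_simps)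
  then show ?thesis by (simp add: Ainf_def)
qed

text \<open>That is, \<open>\<sigma>\<^sub>\<plusminus>\<^sup>2 (\<beta> \<plusminus> i D/2) = \<lambda> - (\<delta> \<plusminus> i \<alpha>)\<close>; so \<open>\<sigma>\<^sub>\<plusminus>\<close> is purely imaginary
  exactly when \<open>\<lambda>\<close> lies on a branch of the essential spectrum.\<close>
lemma a_par_b_par_mult:
  assumes "(D, \<beta>) \<noteq> (0, 0)"
  shows "(a_par D \<beta> \<delta> \<alpha> lam + \<i> * b_par D \<beta> \<delta> \<alpha> lam) * Complex \<beta> (D/2) = lam - Complex \<delta> \<alpha>"
    and "(a_par D \<beta> \<delta> \<alpha> lam - \<i> * b_par D \<beta> \<delta> \<alpha> lam) * Complex \<beta> (- D/2) = lam - Complex \<delta> (- \<alpha>)"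
proof -
  have d: "complex_of_real (det (Bm D \<beta>)) \<noteq> 0" using det_Bm_pos[OF assms] by simp
  have e: "complex_of_real (det (Bm D \<beta>)) = of_real \<beta> * of_real \<beta> + of_real D * of_real D / 4"
    by (simp add: det_Bm power2_eq_square)
  show "(a_par D \<beta> \<delta> \<alpha> lam + \<i> * b_par D \<beta> \<delta> \<alpha> lam) * Complex \<beta> (D/2) = lam - Complex \<delta> \<alpha>"
    using d unfolding a_par_def b_par_def Complex_eq
    by (simp add: field_simps) (simp add: e algebra_simps)
  show "(a_par D \<beta> \<delta> \<alpha> lam - \<i> * b_par D \<beta> \<delta> \<alpha> lam) * Complex \<beta> (- D/2) = lam - Complex \<delta> (- \<alpha>)"
    using d unfolding a_par_def b_par_def Complex_eq
    by (simp add: field_simps) (simp add: e algebra_simps)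
qed

lemma Re_csqrt_pos:
  assumes "\<And>s::real. z \<noteq> - complex_of_real (s\<^sup>2)"
  shows "0 < Re (csqrt z)"
proof (rule ccontr)
  define y where "y = Im (csqrt z)"
  assume "\<not> 0 < Re (csqrt z)"
  then have "csqrt z = \<i> * complex_of_real y"
    using Re_csqrt[of z] by (simp add: y_def complex_eq_iff)
  then have "z = - complex_of_real (y\<^sup>2)"
    using power2_csqrt[of z] by (simp add: power2_eq_square algebra_simps)
  then show False using assms by blast
qed

lemma Re_sigma_pos:
  assumes "(D, \<beta>) \<noteq> (0, 0)" and "lam \<notin> ess_spec D \<beta> \<delta> \<alpha>"
  shows "0 < Re (sigma_p D \<beta> \<delta> \<alpha> lam)" and "0 < Re (sigma_m D \<beta> \<delta> \<alpha> lam)"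
proof -
  have "a_par D \<beta> \<delta> \<alpha> lam + \<i> * b_par D \<beta> \<delta> \<alpha> lam \<noteq> - complex_of_real (s\<^sup>2)" for s
  proof
    assume eq: "a_par D \<beta> \<delta> \<alpha> lam + \<i> * b_par D \<beta> \<delta> \<alpha> lam = - complex_of_real (s\<^sup>2)"
    have "lam = Complex \<delta> \<alpha> - complex_of_real (s\<^sup>2) * Complex \<beta> (D / 2)"
      using a_par_b_par_mult(1)[OF assms(1), of \<delta> \<alpha> lam] unfolding eq by (simp add: algebra_simps)
    then show False using assms(2) unfolding ess_spec_def by blast
  qed
  then show "0 < Re (sigma_p D \<beta> \<delta> \<alpha> lam)" unfolding sigma_p_def by (rule Re_csqrt_pos)
  have "a_par D \<beta> \<delta> \<alpha> lam - \<i> * b_par D \<beta> \<delta> \<alpha> lam \<noteq> - complex_of_real (s\<^sup>2)" for s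
  proof
    assume eq: "a_par D \<beta> \<delta> \<alpha> lam - \<i> * b_par D \<beta> \<delta> \<alpha> lam = - complex_of_real (s\<^sup>2)"
    have "lam = Complex \<delta> (- \<alpha>) - complex_of_real (s\<^sup>2) * Complex \<beta> (- D / 2)"
      using a_par_b_par_mult(2)[OF assms(1), of \<delta> \<alpha> lam] unfolding eq by (simp add: algebra_simps)
    then show False using assms(2) unfolding ess_spec_def by blast
  qed
  then show "0 < Re (sigma_m D \<beta> \<delta> \<alpha> lam)" unfolding sigma_m_def by (rule Re_csqrt_pos)
qed

lemma kappa1_pos:
  "(D, \<beta>) \<noteq> (0, 0) \<Longrightarrow> lam \<notin> ess_spec D \<beta> \<delta> \<alpha> \<Longrightarrow> 0 < kappa1 D \<beta> \<delta> \<alpha> lam"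
  using Re_sigma_pos by (simp add: kappa1_def)

definition vec4 :: "'a list \<Rightarrow> 'a^4" where
  "vec4 xs = (\<chi> i. xs ! idx4 i)"

lemma vec4_nth [simp]: "vec4 xs $ i = xs ! idx4 i"
  by (simp add: vec4_def)

definition eigvecs_distinct :: "complex \<Rightarrow> complex \<Rightarrow> complex^4^4" where
  "eigvecs_distinct sp sm = mat4 [[\<i> / sm, - \<i> / sp, \<i> / sp, - \<i> / sm],
                                  [- 1 / sm, - 1 / sp, 1 / sp, 1 / sm],
                                  [- \<i>, \<i>, \<i>, - \<i>],
                                  [1, 1, 1, 1]]"

definition eigvecs_distinct_inv :: "complex \<Rightarrow> complex \<Rightarrow> complex^4^4" where
  "eigvecs_distinct_inv sp sm = mat4 [[- \<i> * sm / 4, - sm / 4, \<i> / 4, 1 / 4],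
                                      [\<i> * sp / 4, - sp / 4, - \<i> / 4, 1 / 4],
                                      [- \<i> * sp / 4, sp / 4, - \<i> / 4, 1 / 4],
                                      [\<i> * sm / 4, sm / 4, \<i> / 4, 1 / 4]]"

definition eigvecs_double :: "complex \<Rightarrow> complex^4^4" where
  "eigvecs_double s = mat4 [[0, 1, 0, 1], [1, 0, 1, 0], [0, - s, 0, s], [- s, 0, s, 0]]"

definition eigvecs_double_inv :: "complex \<Rightarrow> complex^4^4" where
  "eigvecs_double_inv s = mat4 [[0, 1/2, 0, - 1/(2 * s)], [1/2, 0, - 1/(2 * s), 0],
                                [0, 1/2, 0, 1/(2 * s)], [1/2, 0, 1/(2 * s), 0]]"

lemma similarity4_eigvecs_distinct:
  "sp \<noteq> 0 \<Longrightarrow> sm \<noteq> 0 \<Longrightarrow> similarity4 (eigvecs_distinct sp sm) (eigvecs_distinct_inv sp sm)"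
  by unfold_locales (simp_all add: vec_eq_iff forall_4 mat44_mult_nth mat_nth
      eigvecs_distinct_def eigvecs_distinct_inv_def field_simps)

lemma similarity4_eigvecs_double: "s \<noteq> 0 \<Longrightarrow> similarity4 (eigvecs_double s) (eigvecs_double_inv s)"
  by unfold_locales (simp_all add: vec_eq_iff forall_4 mat44_mult_nth mat_nth
      eigvecs_double_def eigvecs_double_inv_def field_simps)

lemma blk_mult_eigvecs_distinct:
  assumes "sp \<noteq> 0" "sm \<noteq> 0" "sp * sp = a + \<i> * b" "sm * sm = a - \<i> * b"
  shows "blk 0 (mat 1) (mat2 a (- b) b a) 0 ** eigvecs_distinct sp sm
           = eigvecs_distinct sp sm ** diag (vec4 [- sm, - sp, sp, sm])"
proof -
  have a: "a = (sp * sp + sm * sm) / 2" and "sp * sp - sm * sm = 2 * \<i> * b"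
    using assms(3,4) by simp_all
  then have b: "b = - \<i> * (sp * sp - sm * sm) / 2" by (simp add: algebra_simps)
  show ?thesis using assms(1,2) unfolding a b
    by (simp add: vec_eq_iff forall_4 mat44_mult_nth diag_nth mat_nth eigvecs_distinct_def
        field_simps)
qed

lemma blk_mult_eigvecs_double:
  assumes "s \<noteq> 0" "s * s = a" "b = 0"
  shows "blk 0 (mat 1) (mat2 a (- b) b a) 0 ** eigvecs_double s
           = eigvecs_double s ** diag (vec4 [- s, - s, s, s])"
  using assms by (simp add: vec_eq_iff forall_4 mat44_mult_nth diag_nth mat_nth eigvecs_double_def)

text \<open>The two branches of \<open>Pm\<close>: \<open>\<sigma>\<^sub>+ = \<sigma>\<^sub>-\<close> forces \<open>b = 0\<close>, and then \<open>\<plusminus>\<sigma>\<close> are double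
  eigenvalues.\<close>
lemma Ainf_diagonalization:
  assumes "(D, \<beta>) \<noteq> (0, 0)" and "lam \<notin> ess_spec D \<beta> \<delta> \<alpha>"
  defines "sp \<equiv> sigma_p D \<beta> \<delta> \<alpha> lam" and "sm \<equiv> sigma_m D \<beta> \<delta> \<alpha> lam"
  obtains Pinv where "similarity4 (Pm D \<beta> \<delta> \<alpha> lam) Pinv"
    and "Ainf D \<beta> \<delta> \<alpha> lam = similarity.sim (Pm D \<beta> \<delta> \<alpha> lam) Pinv (diag (vec4 [- sm, - sp, sp, sm]))"
proof -
  let ?a = "a_par D \<beta> \<delta> \<alpha> lam" and ?b = "b_par D \<beta> \<delta> \<alpha> lam"
  have "0 < Re sp" "0 < Re sm" using Re_sigma_pos[OF assms(1,2)] by (simp_all add: sp_def sm_def)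
  then have nz: "sp \<noteq> 0" "sm \<noteq> 0" by auto
  have sq: "sp * sp = ?a + \<i> * ?b" "sm * sm = ?a - \<i> * ?b"
    by (simp_all add: sp_def sm_def sigma_p_def sigma_m_def power2_eq_square[symmetric])
  note A = Ainf_eq_blk[OF assms(1), of \<delta> \<alpha> lam]
  show ?thesis
  proof (cases "sp = sm")
    case True
    then have "?b = 0" "sp * sp = ?a" using sq by simp_all
    moreover have "Pm D \<beta> \<delta> \<alpha> lam = eigvecs_double sp"
      using True by (simp add: Pm_def Let_def sp_def sm_def eigvecs_double_def)
    ultimately show ?thesis
      using that similarity4_eigvecs_double[OF nz(1)] similarity.eq_simI
        blk_mult_eigvecs_double[OF nz(1)] True A unfolding similarity4_def by metis
  next
    case False
    then have "Pm D \<beta> \<delta> \<alpha> lam = eigvecs_distinct sp sm"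
      by (simp add: Pm_def Let_def sp_def sm_def eigvecs_distinct_def)
    then show ?thesis
      using that similarity4_eigvecs_distinct[OF nz] similarity.eq_simI
        blk_mult_eigvecs_distinct[OF nz sq] A unfolding similarity4_def by metis
  qed
qed

lemma opnorm_Ainf_evolution_le:
  assumes "(D, \<beta>) \<noteq> (0, 0)" and "lam \<notin> ess_spec D \<beta> \<delta> \<alpha>"
  defines "A \<equiv> Ainf D \<beta> \<delta> \<alpha> lam" and "Q \<equiv> stable_proj (Ainf D \<beta> \<delta> \<alpha> lam)"
    and "\<kappa> \<equiv> kappa1 D \<beta> \<delta> \<alpha> lam"
  shows "0 \<le> t \<Longrightarrow> opnorm (Q ** mexp (t *\<^sub>R A) ** Q) \<le> cond (Pm D \<beta> \<delta> \<alpha> lam) * exp (- \<kappa> * t)"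
    and "t \<le> 0 \<Longrightarrow> opnorm ((mat 1 - Q) ** mexp (t *\<^sub>R A) ** (mat 1 - Q))
                      \<le> cond (Pm D \<beta> \<delta> \<alpha> lam) * exp (\<kappa> * t)"
proof -
  define sp sm where "sp = sigma_p D \<beta> \<delta> \<alpha> lam" and "sm = sigma_m D \<beta> \<delta> \<alpha> lam"
  define l where "l = vec4 [- sm, - sp, sp, sm]"
  obtain Pinv where sim4: "similarity4 (Pm D \<beta> \<delta> \<alpha> lam) Pinv"
    and A_sim: "A = similarity.sim (Pm D \<beta> \<delta> \<alpha> lam) Pinv (diag l)"
    using Ainf_diagonalization[OF assms(1,2)] unfolding A_def l_def sp_def sm_def by blast
  interpret similarity4 "Pm D \<beta> \<delta> \<alpha> lam" Pinv by (rule sim4)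
  have cond: "cond (Pm D \<beta> \<delta> \<alpha> lam) = opnorm (Pm D \<beta> \<delta> \<alpha> lam) * opnorm Pinv"
    by (simp add: cond_def matrix_inv_P)
  have "0 < Re sp" "0 < Re sm" "\<kappa> = min (Re sp) (Re sm)"
    using Re_sigma_pos[OF assms(1,2)] by (simp_all add: sp_def sm_def \<kappa>_def kappa1_def)
  then have neg: "Re (l$i) < 0 \<longleftrightarrow> i \<in> {1, 2}" and pos: "Re (l$i) > 0 \<longleftrightarrow> i \<notin> {1, 2}"
    and decay: "i \<in> {1, 2} \<Longrightarrow> Re (l$i) \<le> - \<kappa>" and growth: "i \<notin> {1, 2} \<Longrightarrow> \<kappa> \<le> Re (l$i)" for i
    using exhaust_4[of i] by (auto simp: l_def)
  show "0 \<le> t \<Longrightarrow> opnorm (Q ** mexp (t *\<^sub>R A) ** Q) \<le> cond (Pm D \<beta> \<delta> \<alpha> lam) * exp (- \<kappa> * t)"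
    using opnorm_stable_evolution_le[OF neg pos decay] unfolding Q_def A_def[symmetric] A_sim cond .
  show "t \<le> 0 \<Longrightarrow> opnorm ((mat 1 - Q) ** mexp (t *\<^sub>R A) ** (mat 1 - Q))
          \<le> cond (Pm D \<beta> \<delta> \<alpha> lam) * exp (\<kappa> * t)"
    using opnorm_unstable_evolution_le[OF neg pos growth] unfolding Q_def A_def[symmetric] A_sim cond .
qed

lemma opnorm_Kmat_le:
  assumes "(D, \<beta>) \<noteq> (0, 0)" and "lam \<notin> ess_spec D \<beta> \<delta> \<alpha>"
  shows "opnorm (Kmat D \<beta> \<delta> \<alpha> lam x y Mx Vy My)
    \<le> cond (Pm D \<beta> \<delta> \<alpha> lam) * exp (- kappa1 D \<beta> \<delta> \<alpha> lam * \<bar>x - y\<bar>) * (opnorm (Rr Mx) * opnorm (Rl D \<beta> Vy My))"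
proof -
  let ?A = "Ainf D \<beta> \<delta> \<alpha> lam" and ?Rr = "Rr Mx" and ?Rl = "Rl D \<beta> Vy My"
  let ?Q = "stable_proj ?A" and ?E = "mexp ((x - y) *\<^sub>R ?A)"
  let ?bound = "cond (Pm D \<beta> \<delta> \<alpha> lam) * exp (- kappa1 D \<beta> \<delta> \<alpha> lam * \<bar>x - y\<bar>)"
  obtain G :: "complex^4^4" where G: "opnorm G \<le> ?bound"
    and K: "opnorm (Kmat D \<beta> \<delta> \<alpha> lam x y Mx Vy My) \<le> opnorm ?Rr * opnorm G * opnorm ?Rl"
  proof (cases "y \<le> x")
    case True
    then have Kmat: "Kmat D \<beta> \<delta> \<alpha> lam x y Mx Vy My = - (?Rr ** (?Q ** ?E ** ?Q) ** ?Rl)"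
      by (simp add: Kmat_def Let_def matrix_mul_assoc)
    have "opnorm (?Q ** ?E ** ?Q) \<le> ?bound"
      using opnorm_Ainf_evolution_le(1)[OF assms, of "x - y"] True by simp
    moreover have "opnorm (Kmat D \<beta> \<delta> \<alpha> lam x y Mx Vy My) \<le> opnorm ?Rr * opnorm (?Q ** ?E ** ?Q) * opnorm ?Rl"
      unfolding Kmat opnorm_uminus by (rule opnorm_mult3_le)
    ultimately show ?thesis by (rule that)
  next
    case False
    then have Kmat: "Kmat D \<beta> \<delta> \<alpha> lam x y Mx Vy My = ?Rr ** ((mat 1 - ?Q) ** ?E ** (mat 1 - ?Q)) ** ?Rl"
      by (simp add: Kmat_def Let_def matrix_mul_assoc)
    have "opnorm ((mat 1 - ?Q) ** ?E ** (mat 1 - ?Q)) \<le> ?bound"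
      using opnorm_Ainf_evolution_le(2)[OF assms, of "x - y"] False by (simp add: abs_of_neg algebra_simps)
    moreover have "opnorm (Kmat D \<beta> \<delta> \<alpha> lam x y Mx Vy My)
        \<le> opnorm ?Rr * opnorm ((mat 1 - ?Q) ** ?E ** (mat 1 - ?Q)) * opnorm ?Rl"
      unfolding Kmat by (rule opnorm_mult3_le)
    ultimately show ?thesis by (rule that)
  qed
  have "opnorm ?Rr * opnorm G * opnorm ?Rl \<le> opnorm ?Rr * ?bound * opnorm ?Rl"
    by (intro mult_left_mono mult_right_mono G opnorm_nonneg)
  with K show ?thesis by (simp add: mult_ac)
qed

lemma sqrt_mult_le_exp_decay:
  fixes r s C a x y :: real
  assumes "r \<le> C * exp (- a * \<bar>x\<bar>)" "s \<le> C * exp (- a * \<bar>y\<bar>)" "0 \<le> s" "0 \<le> C"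
  shows "sqrt (r * s) \<le> C * exp (- a * (\<bar>x\<bar> + \<bar>y\<bar>) / 2)"
proof -
  have "r * s \<le> (C * exp (- a * \<bar>x\<bar>)) * (C * exp (- a * \<bar>y\<bar>))"
    using assms by (intro mult_mono) auto
  also have "\<dots> = (C * exp (- a * (\<bar>x\<bar> + \<bar>y\<bar>) / 2))\<^sup>2"
    by (simp add: power2_eq_square mult_exp_exp algebra_simps)
  finally show ?thesis using assms(4) by (simp add: real_le_lsqrt real_sqrt_le_iff)
qed

lemma opnorm_Kmat_exp_decay_le:
  assumes "(D, \<beta>) \<noteq> (0, 0)" and "lam \<notin> ess_spec D \<beta> \<delta> \<alpha>" and "orthogonal_matrix Vy"
    and "0 \<le> C" and "opnorm (Rmat D \<beta> Mx) \<le> C * exp (- a * \<bar>x\<bar>)"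
    and "opnorm (Rmat D \<beta> My) \<le> C * exp (- a * \<bar>y\<bar>)"
  shows "opnorm (Kmat D \<beta> \<delta> \<alpha> lam x y Mx Vy My)
    \<le> cond (Pm D \<beta> \<delta> \<alpha> lam) * C * exp (- a * (\<bar>x\<bar> + \<bar>y\<bar>) / 2) * exp (- kappa1 D \<beta> \<delta> \<alpha> lam * \<bar>x - y\<bar>)"
proof -
  let ?c = "cond (Pm D \<beta> \<delta> \<alpha> lam)" and ?e = "exp (- kappa1 D \<beta> \<delta> \<alpha> lam * \<bar>x - y\<bar>)"
  have "opnorm (Rr Mx) * opnorm (Rl D \<beta> Vy My) \<le> sqrt (opnorm (Rmat D \<beta> Mx) * opnorm (Rmat D \<beta> My))"
    by (rule opnorm_Rr_mult_opnorm_Rl_le[OF assms(1,3)])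
  also have "\<dots> \<le> C * exp (- a * (\<bar>x\<bar> + \<bar>y\<bar>) / 2)"
    by (rule sqrt_mult_le_exp_decay[OF assms(5,6) opnorm_nonneg assms(4)])
  finally have "?c * ?e * (opnorm (Rr Mx) * opnorm (Rl D \<beta> Vy My)) \<le> ?c * ?e * (C * exp (- a * (\<bar>x\<bar> + \<bar>y\<bar>) / 2))"
    by (intro mult_left_mono) (simp_all add: cond_def opnorm_nonneg)
  with opnorm_Kmat_le[OF assms(1,2), of x y Mx Vy My]
  have "opnorm (Kmat D \<beta> \<delta> \<alpha> lam x y Mx Vy My) \<le> ?c * ?e * (C * exp (- a * (\<bar>x\<bar> + \<bar>y\<bar>) / 2))"
    by (rule order_trans)
  then show ?thesis by (simp add: mult_ac)
qed

lemma norm_nth_le_of_opnorm_le_mult: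
  assumes "opnorm K \<le> B * w * e" and "0 \<le> B" "0 \<le> w" "w \<le> 1" "0 \<le> e" "e \<le> 1"
  shows "cmod (K $ i $ j) \<le> B * w" and "cmod (K $ i $ j) \<le> B * e"
proof -
  have "w * e \<le> w" "w * e \<le> e"
    using assms(3-6) by (simp_all add: mult_left_le mult_left_le_one_le)
  then have "B * w * e \<le> B * w" "B * w * e \<le> B * e"
    using assms(2) by (simp_all add: mult.assoc mult_left_mono)
  then show "cmod (K $ i $ j) \<le> B * w" "cmod (K $ i $ j) \<le> B * e"
    using norm_nth_le_opnorm[of K i j] assms(1) by linarith+
qed

theorem lemma6p7:
  fixes D \<beta> \<delta> \<alpha> \<epsilon> \<gamma> \<mu> \<nu> C_R a_R :: real
    and lam :: complex
    and \<psi> \<psi>' \<psi>'' :: "real \<Rightarrow> complex"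
    and V :: "real \<Rightarrow> real^2^2"
  assumes beta_nonneg: "\<beta> \<ge> 0"
    and D_beta: "(D, \<beta>) \<noteq> (0, 0)"
    and d1: "\<And>x. (\<psi> has_vector_derivative \<psi>' x) (at x)"
    and d2: "\<And>x. (\<psi>' has_vector_derivative \<psi>'' x) (at x)"
    and cgle: "\<And>x. complex_of_real \<alpha> * \<psi> x + complex_of_real (D / 2) * \<psi>'' x
                  + complex_of_real \<gamma> * (cmod (\<psi> x))\<^sup>2 * \<psi> x
                  + complex_of_real \<nu> * (cmod (\<psi> x))^4 * \<psi> x
               = \<i> * complex_of_real \<delta> * \<psi> x + \<i> * complex_of_real \<epsilon> * (cmod (\<psi> x))\<^sup>2 * \<psi> x
                  + \<i> * complex_of_real \<beta> * \<psi>'' x + \<i> * complex_of_real \<mu> * (cmod (\<psi> x))^4 * \<psi> x"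
    and pulse_top: "(\<psi> \<longlongrightarrow> 0) at_top"
    and pulse_bot: "(\<psi> \<longlongrightarrow> 0) at_bot"
    and polar: "\<And>x. orthogonal_matrix (V x)
                  \<and> Mm \<epsilon> \<gamma> \<mu> \<nu> (\<psi> x) = V x ** absM (Mm \<epsilon> \<gamma> \<mu> \<nu> (\<psi> x))"
    and lam: "lam \<notin> ess_spec D \<beta> \<delta> \<alpha>"
    and CR: "C_R > 0" and aR: "a_R > 0"
    and Rbound: "\<And>x. opnorm (Rmat D \<beta> (Mm \<epsilon> \<gamma> \<mu> \<nu> (\<psi> x))) \<le> C_R * exp (- a_R * \<bar>x\<bar>)"
  shows "(\<forall>x y. y \<le> x \<longrightarrow>
            opnorm (Kmat D \<beta> \<delta> \<alpha> lam x y (Mm \<epsilon> \<gamma> \<mu> \<nu> (\<psi> x)) (V y) (Mm \<epsilon> \<gamma> \<mu> \<nu> (\<psi> y)))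
            \<le> sqrt 2 * cond (Pm D \<beta> \<delta> \<alpha> lam) * C_R * exp (- a_R * (\<bar>x\<bar> + \<bar>y\<bar>) / 2)
               * exp (- kappa1 D \<beta> \<delta> \<alpha> lam * (x - y)))
       \<and> (\<forall>x y. x \<le> y \<longrightarrow>
            opnorm (Kmat D \<beta> \<delta> \<alpha> lam x y (Mm \<epsilon> \<gamma> \<mu> \<nu> (\<psi> x)) (V y) (Mm \<epsilon> \<gamma> \<mu> \<nu> (\<psi> y)))
            \<le> sqrt 2 * cond (Pm D \<beta> \<delta> \<alpha> lam) * C_R * exp (- a_R * (\<bar>x\<bar> + \<bar>y\<bar>) / 2)
               * exp (kappa1 D \<beta> \<delta> \<alpha> lam * (x - y)))
       \<and> (\<exists>C. \<forall>i j x y.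
            cmod (Kmat D \<beta> \<delta> \<alpha> lam x y (Mm \<epsilon> \<gamma> \<mu> \<nu> (\<psi> x)) (V y) (Mm \<epsilon> \<gamma> \<mu> \<nu> (\<psi> y)) $ i $ j)
              \<le> C * exp (- a_R * (\<bar>x\<bar> + \<bar>y\<bar>) / 2)
          \<and> cmod (Kmat D \<beta> \<delta> \<alpha> lam x y (Mm \<epsilon> \<gamma> \<mu> \<nu> (\<psi> x)) (V y) (Mm \<epsilon> \<gamma> \<mu> \<nu> (\<psi> y)) $ i $ j)
              \<le> C * exp (- kappa1 D \<beta> \<delta> \<alpha> lam * \<bar>x - y\<bar>))"
proof -
  let ?K = "\<lambda>x y. Kmat D \<beta> \<delta> \<alpha> lam x y (Mm \<epsilon> \<gamma> \<mu> \<nu> (\<psi> x)) (V y) (Mm \<epsilon> \<gamma> \<mu> \<nu> (\<psi> y))"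
  let ?c = "cond (Pm D \<beta> \<delta> \<alpha> lam)" and ?\<kappa> = "kappa1 D \<beta> \<delta> \<alpha> lam"
  let ?B = "?c * C_R"
  let ?w = "\<lambda>x y. exp (- a_R * (\<bar>x\<bar> + \<bar>y\<bar>) / 2)"
  have B: "0 \<le> ?B" using CR by (simp add: cond_def opnorm_nonneg)
  have K: "opnorm (?K x y) \<le> ?B * ?w x y * exp (- ?\<kappa> * \<bar>x - y\<bar>)" for x y
    using polar[of y] CR by (intro opnorm_Kmat_exp_decay_le[OF D_beta lam _ _ Rbound Rbound]) simp_all
  then have "cmod (?K x y $ i $ j) \<le> ?B * ?w x y \<and> cmod (?K x y $ i $ j) \<le> ?B * exp (- ?\<kappa> * \<bar>x - y\<bar>)"
    for i j x y
    using norm_nth_le_of_opnorm_le_mult[OF K B] aR kappa1_pos[OF D_beta lam] by simp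
  moreover have K2: "opnorm (?K x y) \<le> sqrt 2 * ?c * C_R * ?w x y * exp (- ?\<kappa> * \<bar>x - y\<bar>)" for x y
  proof -
    have "1 * (?B * ?w x y * exp (- ?\<kappa> * \<bar>x - y\<bar>)) \<le> sqrt 2 * (?B * ?w x y * exp (- ?\<kappa> * \<bar>x - y\<bar>))"
      by (rule mult_right_mono) (use B in simp_all)
    then show ?thesis using K[of x y] by (simp add: mult.assoc)
  qed
  moreover have "opnorm (?K x y) \<le> sqrt 2 * ?c * C_R * ?w x y * exp (- ?\<kappa> * (x - y))" if "y \<le> x" for x y
    using K2[of x y] that by simp
  moreover have "opnorm (?K x y) \<le> sqrt 2 * ?c * C_R * ?w x y * exp (?\<kappa> * (x - y))" if "x \<le> y" for x y
    using K2[of x y] that by (simp add: abs_of_nonpos algebra_simps)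
  ultimately show ?thesis by blast
qed

end
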